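(* A real number $\alpha$ has a primitive recursive nested interval representation if and only if it admits a primitive recursive approximation.
   Context: $\mathbb{N}=\{0,1,2,\dots\}$. $\mathfrak{PR}$ denotes the primitive recursive functions $\mathbb{N}^n\to\mathbb{N}$. A $\mathfrak{PR}$-sequence is a function $A:\mathbb{N}\to\mathbb{Q}$ of the form $A(x)=\frac{f(x)-g(x)}{h(x)+1}$ with $f,g,h:\mathbb{N}\to\mathbb{N}$ primitive recursive. A primitive recursive approximation of $\alpha$ is a pair $(A,E)$ of $\mathfrak{PR}$-sequences such that $E$ is monotonically decreasing to $0$ and $|A(x)-\alpha|\le E(x)$ for all $x$. A primitive recursive nested interval representation of $\alpha$ is a pair of $\mathfrak{PR}$-sequences $f,g:\mathbb{N}\to\mathbb{Q}$ with $f(x)\le f(x+1)\le\alpha\le g(x+1)\le g(x)$ for all $x$ and $\lim_{x\to\infty}(g(x)-f(x))=0$. *)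

theory Defs
  imports Complex_Main
begin

text \<open>Following the classic formulation of the primitive recursive functions
  as functions on argument lists; missing arguments default to 0.\<close>

definition hd0 :: "nat list \<Rightarrow> nat" where
  "hd0 l = (case l of [] \<Rightarrow> 0 | x # _ \<Rightarrow> x)"

definition SC :: "nat list \<Rightarrow> nat" where
  "SC l = Suc (hd0 l)"

definition CONSTANT :: "nat \<Rightarrow> nat list \<Rightarrow> nat" where
  "CONSTANT n l = n"

definition PROJ :: "nat \<Rightarrow> nat list \<Rightarrow> nat" where
  "PROJ i l = hd0 (drop i l)"

definition COMP :: "(nat list \<Rightarrow> nat) \<Rightarrow> (nat list \<Rightarrow> nat) list \<Rightarrow> nat list \<Rightarrow> nat" where
  "COMP g fs l = g (map (\<lambda>f. f l) fs)"

definition PREC :: "(nat list \<Rightarrow> nat) \<Rightarrow> (nat list \<Rightarrow> nat) \<Rightarrow> nat list \<Rightarrow> nat" where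
  "PREC f g l =
    (case l of
      [] \<Rightarrow> 0
    | x # l' \<Rightarrow> rec_nat (f l') (\<lambda>y r. g (r # y # l')) x)"

inductive PRIMREC :: "(nat list \<Rightarrow> nat) \<Rightarrow> bool" where
  SC: "PRIMREC SC"
| CONSTANT: "PRIMREC (CONSTANT k)"
| PROJ: "PRIMREC (PROJ i)"
| COMP: "PRIMREC g \<Longrightarrow> \<forall>f \<in> set fs. PRIMREC f \<Longrightarrow> PRIMREC (COMP g fs)"
| PREC: "PRIMREC f \<Longrightarrow> PRIMREC g \<Longrightarrow> PRIMREC (PREC f g)"

definition pr1 :: "(nat \<Rightarrow> nat) \<Rightarrow> bool" where
  "pr1 f \<longleftrightarrow> (\<exists>F. PRIMREC F \<and> (\<forall>x. F [x] = f x))"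

definition PR_seq :: "(nat \<Rightarrow> rat) \<Rightarrow> bool" where
  "PR_seq A \<longleftrightarrow> (\<exists>f g h. pr1 f \<and> pr1 g \<and> pr1 h \<and>
      (\<forall>x. A x = (of_nat (f x) - of_nat (g x)) / (of_nat (h x) + 1)))"

definition pr_approximation :: "(nat \<Rightarrow> rat) \<Rightarrow> (nat \<Rightarrow> rat) \<Rightarrow> real \<Rightarrow> bool" where
  "pr_approximation A E \<alpha> \<longleftrightarrow> PR_seq A \<and> PR_seq E \<and> decseq E \<and>
      (\<lambda>x. real_of_rat (E x)) \<longlonglongrightarrow> 0 \<and>
      (\<forall>x. \<bar>real_of_rat (A x) - \<alpha>\<bar> \<le> real_of_rat (E x))"

definition pr_nested_interval :: "(nat \<Rightarrow> rat) \<Rightarrow> (nat \<Rightarrow> rat) \<Rightarrow> real \<Rightarrow> bool" where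
  "pr_nested_interval f g \<alpha> \<longleftrightarrow> PR_seq f \<and> PR_seq g \<and>
      (\<forall>x. f x \<le> f (x+1) \<and> real_of_rat (f (x+1)) \<le> \<alpha> \<and>
           \<alpha> \<le> real_of_rat (g (x+1)) \<and> g (x+1) \<le> g x) \<and>
      (\<lambda>x. real_of_rat (g x - f x)) \<longlonglongrightarrow> 0"

end

theory Submission imports Defs begin

text \<open>A nested interval representation \<open>(f, g)\<close> yields the approximation \<open>(f, g - f)\<close>.
  Conversely, an approximation \<open>(A, E)\<close> gives lower bounds \<open>A - E\<close> and upper bounds \<open>A + E\<close>
  of \<open>\<alpha>\<close>; their running maximum and running minimum are nested intervals shrinking like \<open>2 E\<close>.
  These are again PR-sequences because the index where the running maximum is attained is
  computable by primitive recursion: comparing two values of a PR-sequence amounts to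
  comparing two natural number expressions.\<close>

lemma PRIMREC_const: "PRIMREC (\<lambda>l. k)"
  using PRIMREC.CONSTANT[of k] by (simp add: CONSTANT_def [abs_def])

lemma PRIMREC_nth: "PRIMREC (\<lambda>l. hd0 (drop i l))"
  using PRIMREC.PROJ[of i] by (simp add: PROJ_def [abs_def])

lemma PRIMREC_hd0: "PRIMREC hd0"
  using PRIMREC_nth[of 0] by simp

lemma PRIMREC_compose1: "PRIMREC F \<Longrightarrow> PRIMREC G \<Longrightarrow> PRIMREC (\<lambda>l. F [G l])"
  using PRIMREC.COMP[of F "[G]"] by (simp add: COMP_def [abs_def])

lemma PRIMREC_compose2:
  "PRIMREC F \<Longrightarrow> PRIMREC G \<Longrightarrow> PRIMREC H \<Longrightarrow> PRIMREC (\<lambda>l. F [G l, H l])"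
  using PRIMREC.COMP[of F "[G, H]"] by (simp add: COMP_def [abs_def])

lemma PRIMREC_Suc: "PRIMREC G \<Longrightarrow> PRIMREC (\<lambda>l. Suc (G l))"
  using PRIMREC_compose1[OF PRIMREC.SC] by (simp add: SC_def hd0_def)

text \<open>The argument lists \<open>[b, a]\<close> below are ordered so that the recursion runs on the first entry.\<close>

definition add_PR :: "nat list \<Rightarrow> nat" where
  "add_PR = PREC (PROJ 0) (COMP SC [PROJ 0])"

definition mult_PR :: "nat list \<Rightarrow> nat" where
  "mult_PR = PREC (CONSTANT 0) (COMP add_PR [PROJ 0, PROJ 2])"

definition pred_PR :: "nat list \<Rightarrow> nat" where
  "pred_PR = PREC (CONSTANT 0) (PROJ 1)"

definition monus_PR :: "nat list \<Rightarrow> nat" where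
  "monus_PR = PREC (PROJ 0) (COMP pred_PR [PROJ 0])"

lemma add_PR: "PRIMREC add_PR" "add_PR [b, a] = a + b"
  unfolding add_PR_def
  by (auto intro!: PRIMREC.intros)
     (induction b; simp add: PREC_def COMP_def PROJ_def SC_def hd0_def)

lemma mult_PR: "PRIMREC mult_PR" "mult_PR [b, a] = b * a"
  unfolding mult_PR_def
  by (auto intro!: PRIMREC.intros add_PR(1))
     (induction b; simp add: PREC_def COMP_def PROJ_def CONSTANT_def hd0_def add_PR(2))

lemma pred_PR: "PRIMREC pred_PR" "pred_PR [a] = a - 1"
  unfolding pred_PR_def
  by (auto intro!: PRIMREC.intros)
     (cases a; simp add: PREC_def PROJ_def CONSTANT_def hd0_def)

lemma monus_PR: "PRIMREC monus_PR" "monus_PR [b, a] = a - b"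
  unfolding monus_PR_def
  by (auto intro!: PRIMREC.intros pred_PR(1))
     (induction b; simp add: PREC_def COMP_def PROJ_def hd0_def pred_PR(2))

lemma PRIMREC_add: "PRIMREC F \<Longrightarrow> PRIMREC G \<Longrightarrow> PRIMREC (\<lambda>l. F l + G l)"
  using PRIMREC_compose2[OF add_PR(1), of G F] by (simp add: add_PR(2))

lemma PRIMREC_mult: "PRIMREC F \<Longrightarrow> PRIMREC G \<Longrightarrow> PRIMREC (\<lambda>l. F l * G l)"
  using PRIMREC_compose2[OF mult_PR(1), of F G] by (simp add: mult_PR(2))

lemma PRIMREC_diff: "PRIMREC F \<Longrightarrow> PRIMREC G \<Longrightarrow> PRIMREC (\<lambda>l. F l - G l)"
  using PRIMREC_compose2[OF monus_PR(1), of G F] by (simp add: monus_PR(2))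

lemma PRIMREC_If_le:
  assumes "PRIMREC F" "PRIMREC G" "PRIMREC H" "PRIMREC K"
  shows "PRIMREC (\<lambda>l. if F l \<le> G l then H l else K l)"
proof -
  have "PRIMREC (\<lambda>l. H l * (1 - (F l - G l)) + K l * (1 - (1 - (F l - G l))))"
    by (intro PRIMREC_add PRIMREC_mult PRIMREC_diff PRIMREC_const assms)
  moreover have "(\<lambda>l. H l * (1 - (F l - G l)) + K l * (1 - (1 - (F l - G l))))
      = (\<lambda>l. if F l \<le> G l then H l else K l)"
    by auto
  ultimately show ?thesis by simp
qed

lemma pr1_iff_PRIMREC_hd0: "pr1 f \<longleftrightarrow> PRIMREC (\<lambda>l. f (hd0 l))"
proof
  assume "pr1 f"
  then obtain F where "PRIMREC F" and F: "\<And>x. F [x] = f x"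
    unfolding pr1_def by blast
  then show "PRIMREC (\<lambda>l. f (hd0 l))"
    using PRIMREC_compose1[OF \<open>PRIMREC F\<close> PRIMREC_hd0] by (simp add: F)
next
  assume "PRIMREC (\<lambda>l. f (hd0 l))"
  then show "pr1 f"
    unfolding pr1_def by (intro exI[of _ "\<lambda>l. f (hd0 l)"]) (simp add: hd0_def)
qed

lemma PRIMREC_pr1_comp: "pr1 f \<Longrightarrow> PRIMREC G \<Longrightarrow> PRIMREC (\<lambda>l. f (G l))"
  unfolding pr1_def using PRIMREC_compose1 by fastforce

lemma pr1_comp: "pr1 f \<Longrightarrow> pr1 g \<Longrightarrow> pr1 (\<lambda>x. f (g x))"
  unfolding pr1_iff_PRIMREC_hd0 by (rule PRIMREC_pr1_comp) (simp_all add: pr1_iff_PRIMREC_hd0)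

lemma pr1_const: "pr1 (\<lambda>x. k)"
  unfolding pr1_iff_PRIMREC_hd0 by (rule PRIMREC_const)

lemma pr1_add: "pr1 f \<Longrightarrow> pr1 g \<Longrightarrow> pr1 (\<lambda>x. f x + g x)"
  unfolding pr1_iff_PRIMREC_hd0 by (rule PRIMREC_add)

lemma pr1_mult: "pr1 f \<Longrightarrow> pr1 g \<Longrightarrow> pr1 (\<lambda>x. f x * g x)"
  unfolding pr1_iff_PRIMREC_hd0 by (rule PRIMREC_mult)

lemma pr1_rec_nat:
  assumes "PRIMREC (\<lambda>l. h (hd0 (drop 1 l)) (hd0 l))"
  shows "pr1 (rec_nat k h)"
  unfolding pr1_def
proof (intro exI conjI allI)
  show "PRIMREC (PREC (CONSTANT k) (\<lambda>l. h (hd0 (drop 1 l)) (hd0 l)))"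
    by (intro PRIMREC.intros assms)
  show "PREC (CONSTANT k) (\<lambda>l. h (hd0 (drop 1 l)) (hd0 l)) [x] = rec_nat k h x" for x
    by (simp add: PREC_def CONSTANT_def hd0_def)
qed

lemma frac_diff_nat_eq:
  fixes a b c d e k :: nat
  shows "(of_nat a - of_nat b) / (of_nat c + 1) - (of_nat d - of_nat e) / (of_nat k + 1)
    = (of_nat (a * (k + 1) + e * (c + 1)) - of_nat (b * (k + 1) + d * (c + 1)))
      / (of_nat (c * k + c + k) + (1 :: 'a :: linordered_field))"
proof -
  have "(of_nat (c * k + c + k) + 1 :: 'a) = (of_nat c + 1) * (of_nat k + 1)"
    by (simp add: algebra_simps)
  moreover have "(of_nat c + 1 :: 'a) > 0" "(of_nat k + 1 :: 'a) > 0"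
    by (simp_all add: add_nonneg_pos)
  ultimately show ?thesis by (simp add: field_simps)
qed

lemma frac_nat_le_iff:
  fixes a b c d e k :: nat
  shows "(of_nat a - of_nat b) / (of_nat c + 1) \<le> ((of_nat d - of_nat e) / (of_nat k + 1) :: 'a :: linordered_field)
    \<longleftrightarrow> a * (k + 1) + e * (c + 1) \<le> d * (c + 1) + b * (k + 1)"
proof -
  have "(of_nat c + 1 :: 'a) > 0" "(of_nat k + 1 :: 'a) > 0"
    by (simp_all add: add_nonneg_pos)
  then have "(of_nat a - of_nat b) / (of_nat c + 1) \<le> ((of_nat d - of_nat e) / (of_nat k + 1) :: 'a)
     \<longleftrightarrow> (of_nat a - of_nat b) * (of_nat k + 1) \<le> (of_nat d - of_nat e) * (of_nat c + (1 :: 'a))"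
    by (simp add: divide_le_eq le_divide_eq mult.commute mult.left_commute)
  also have "\<dots> \<longleftrightarrow> of_nat (a * (k + 1) + e * (c + 1)) \<le> (of_nat (d * (c + 1) + b * (k + 1)) :: 'a)"
    by (simp add: algebra_simps)
  finally show ?thesis by (simp only: of_nat_le_iff)
qed

lemma PR_seq_diff:
  assumes "PR_seq p" "PR_seq q"
  shows "PR_seq (\<lambda>x. p x - q x)"
proof -
  obtain p1 p2 p3 where p: "pr1 p1" "pr1 p2" "pr1 p3"
    "\<And>x. p x = (of_nat (p1 x) - of_nat (p2 x)) / (of_nat (p3 x) + 1)"
    using assms(1) unfolding PR_seq_def by blast
  obtain q1 q2 q3 where q: "pr1 q1" "pr1 q2" "pr1 q3"
    "\<And>x. q x = (of_nat (q1 x) - of_nat (q2 x)) / (of_nat (q3 x) + 1)"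
    using assms(2) unfolding PR_seq_def by blast
  show ?thesis
    unfolding PR_seq_def
  proof (intro exI conjI allI)
    show "pr1 (\<lambda>x. p1 x * (q3 x + 1) + q2 x * (p3 x + 1))"
      and "pr1 (\<lambda>x. p2 x * (q3 x + 1) + q1 x * (p3 x + 1))"
      and "pr1 (\<lambda>x. p3 x * q3 x + p3 x + q3 x)"
      by (intro pr1_add pr1_mult pr1_const p q)+
  qed (simp add: p(4) q(4) frac_diff_nat_eq)
qed

lemma PR_seq_uminus: "PR_seq p \<Longrightarrow> PR_seq (\<lambda>x. - p x)"
  unfolding PR_seq_def by (metis minus_diff_eq minus_divide_left)

lemma PR_seq_add: "PR_seq p \<Longrightarrow> PR_seq q \<Longrightarrow> PR_seq (\<lambda>x. p x + q x)"
  using PR_seq_diff[of p "\<lambda>x. - q x"] PR_seq_uminus[of q] by simp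

lemma PR_seq_comp: "PR_seq p \<Longrightarrow> pr1 m \<Longrightarrow> PR_seq (\<lambda>x. p (m x))"
  unfolding PR_seq_def by (metis pr1_comp)

lemma PRIMREC_If_PR_seq_le:
  assumes "PR_seq s" "PRIMREC F" "PRIMREC G" "PRIMREC H" "PRIMREC K"
  shows "PRIMREC (\<lambda>l. if s (F l) \<le> s (G l) then H l else K l)"
proof -
  obtain s1 s2 s3 where s: "pr1 s1" "pr1 s2" "pr1 s3"
    "\<And>x. s x = (of_nat (s1 x) - of_nat (s2 x)) / (of_nat (s3 x) + 1)"
    using assms(1) unfolding PR_seq_def by blast
  have "PRIMREC (\<lambda>l. u (W l))" if "u \<in> {s1, s2, s3}" "W \<in> {F, G}" for u W
    using that s(1-3) assms(2,3) PRIMREC_pr1_comp by blast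
  then have "PRIMREC (\<lambda>l. if s1 (F l) * (s3 (G l) + 1) + s2 (G l) * (s3 (F l) + 1)
      \<le> s1 (G l) * (s3 (F l) + 1) + s2 (F l) * (s3 (G l) + 1) then H l else K l)"
    by (intro PRIMREC_If_le PRIMREC_add PRIMREC_mult PRIMREC_const assms(4,5)) simp_all
  then show ?thesis by (simp add: s(4) frac_nat_le_iff)
qed

definition running_argmax :: "(nat \<Rightarrow> 'a :: linorder) \<Rightarrow> nat \<Rightarrow> nat" where
  "running_argmax s = rec_nat 0 (\<lambda>y r. if s (Suc y) \<le> s r then r else Suc y)"

lemma running_argmax_0 [simp]: "running_argmax s 0 = 0"
  by (simp add: running_argmax_def)

lemma running_argmax_Suc:
  "running_argmax s (Suc x) = (if s (Suc x) \<le> s (running_argmax s x) then running_argmax s x else Suc x)"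
  by (simp add: running_argmax_def)

lemma running_argmax_le: "running_argmax s x \<le> x"
  by (induction x) (auto simp: running_argmax_Suc)

lemma le_running_argmax: "y \<le> x \<Longrightarrow> s y \<le> s (running_argmax s x)"
proof (induction x)
  case 0
  then show ?case by simp
next
  case (Suc x)
  then show ?case
    by (cases "y = Suc x") (auto simp: running_argmax_Suc le_Suc_eq)
qed

lemma incseq_running_max: "incseq (\<lambda>x. s (running_argmax s x))"
  by (rule incseq_SucI) (simp add: le_running_argmax running_argmax_le le_SucI)

lemma pr1_running_argmax: "PR_seq s \<Longrightarrow> pr1 (running_argmax s)"
  unfolding running_argmax_def
  by (intro pr1_rec_nat PRIMREC_If_PR_seq_le PRIMREC_Suc PRIMREC_nth PRIMREC_hd0)

lemma nested_interval_imp_approximation: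
  assumes "pr_nested_interval f g \<alpha>"
  shows "pr_approximation f (\<lambda>x. g x - f x) \<alpha>"
proof -
  have nested: "f x \<le> f (x + 1)" "real_of_rat (f (x + 1)) \<le> \<alpha>"
      "\<alpha> \<le> real_of_rat (g (x + 1))" "g (x + 1) \<le> g x" for x
    using assms unfolding pr_nested_interval_def by auto
  have "real_of_rat (f x) \<le> \<alpha> \<and> \<alpha> \<le> real_of_rat (g x)" for x
  proof (cases x)
    case 0
    then show ?thesis
      using nested[of 0] of_rat_less_eq[where 'a = real] by (auto intro: order_trans)
  next
    case (Suc y)
    then show ?thesis using nested[of y] by simp
  qed
  then have "\<bar>real_of_rat (f x) - \<alpha>\<bar> \<le> real_of_rat (g x - f x)" for x
    by (simp add: of_rat_diff)
  moreover have "decseq (\<lambda>x. g x - f x)"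
    using nested by (intro decseq_SucI) (simp add: diff_mono)
  ultimately show ?thesis
    using assms PR_seq_diff unfolding pr_nested_interval_def pr_approximation_def by blast
qed

lemma approximation_imp_nested_interval:
  assumes "pr_approximation A E \<alpha>"
  defines "lower \<equiv> \<lambda>x. A x - E x" and "upper \<equiv> \<lambda>x. A x + E x"
  defines "f \<equiv> \<lambda>x. lower (running_argmax lower x)"
    and "g \<equiv> \<lambda>x. upper (running_argmax (\<lambda>x. - upper x) x)"
  shows "pr_nested_interval f g \<alpha>"
proof -
  have A: "PR_seq A" and E: "PR_seq E" and E_lim: "(\<lambda>x. real_of_rat (E x)) \<longlonglongrightarrow> 0"
    and approx: "\<And>x. \<bar>real_of_rat (A x) - \<alpha>\<bar> \<le> real_of_rat (E x)"
    using assms(1) unfolding pr_approximation_def by auto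
  have lower: "PR_seq lower" and neg_upper: "PR_seq (\<lambda>x. - upper x)"
    unfolding lower_def upper_def by (intro PR_seq_diff PR_seq_add PR_seq_uminus A E)+
  have lower_le: "real_of_rat (lower x) \<le> \<alpha>" and le_upper: "\<alpha> \<le> real_of_rat (upper x)" for x
    using approx[of x] by (auto simp: lower_def upper_def of_rat_diff of_rat_add)
  have "PR_seq f" "PR_seq g"
    using PR_seq_comp[OF lower pr1_running_argmax[OF lower]]
      PR_seq_uminus[OF PR_seq_comp[OF neg_upper pr1_running_argmax[OF neg_upper]]]
    by (simp_all add: f_def g_def)
  moreover have "incseq f" "decseq g"
    using incseq_running_max[of lower] incseq_running_max[of "\<lambda>x. - upper x"]
    by (simp_all add: f_def g_def incseq_def decseq_def)
  moreover have bounds: "real_of_rat (f x) \<le> \<alpha>" "\<alpha> \<le> real_of_rat (g x)" for x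
    using lower_le le_upper by (simp_all add: f_def g_def)
  moreover have "(\<lambda>x. real_of_rat (g x - f x)) \<longlonglongrightarrow> 0"
  proof -
    have "g x - f x \<le> 2 * E x" for x
      using le_running_argmax[of x x lower] le_running_argmax[of x x "\<lambda>x. - upper x"]
      by (simp add: f_def g_def lower_def upper_def)
    then have "real_of_rat (g x - f x) \<le> 2 * real_of_rat (E x)" for x
      by (metis of_rat_less_eq of_rat_mult of_rat_numeral_eq)
    moreover have "0 \<le> real_of_rat (g x - f x)" for x
      using bounds[of x] by (simp add: of_rat_diff)
    ultimately show ?thesis
      by (intro tendsto_sandwich[OF _ _ tendsto_const tendsto_mult_right_zero[OF E_lim]]
          always_eventually allI) simp_all
  qed
  ultimately show ?thesis
    unfolding pr_nested_interval_def incseq_Suc_iff decseq_Suc_iff by simp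
qed

theorem mainTheorem19:
  fixes \<alpha> :: real
  shows "(\<exists>f g. pr_nested_interval f g \<alpha>) \<longleftrightarrow> (\<exists>A E. pr_approximation A E \<alpha>)"
  using nested_interval_imp_approximation approximation_imp_nested_interval by blast

end
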